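(* Let $E^3=\{000,011,101,110\}$ and fix $u=u_1u_2u_3\in E^3$. Let $n\ge 1$. Alice, Bob and Carol receive $X=(x_1,\dots,x_n)$, $Y=(y_1,\dots,y_n)$, $Z=(z_1,\dots,z_n)\in\{0,1\}^n$ respectively, under the promise that $x_iy_iz_i\in E^3$ (i.e. $x_i\oplus y_i\oplus z_i=0$) for every $1\le i\le n$. Define $f_u(X,Y,Z)=\bigoplus_{i=1}^n t_u(x_iy_iz_i)$, where $t_u(w)=1$ if $w=u$ and $t_u(w)=0$ otherwise. Suppose the three parties share $n$ copies of the three-qubit state $|\psi_3\rangle=\frac12(|000\rangle-|011\rangle-|101\rangle-|110\rangle)$, the first, second and third qubit of the $i$-th copy being held by Alice, Bob and Carol respectively. Then there is a protocol computing $f_u$ in which the only quantum operations are the following: for each $i$, each party applies to its qubit of the $i$-th copy the Hadamard gate $H$ if its $i$-th input bit differs from the corresponding bit of $u$ and the identity $I$ otherwise (so that the three-qubit operation on the $i$-th copy is $III$, $IHH$, $HIH$, $HHI$ according as $u\oplus x_iy_iz_i$ equals $000,011,101,110$), followed by a measurement of each qubit in the computational basis; after local classical computation, Bob and Carol each send one classical bit to Alice (two classical bits in total), and Alice then outputs $f_u(X,Y,Z)$ correctly for every input satisfying the promise.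
   Context: $H$ denotes the one-qubit Hadamard gate $H|0\rangle=(|0\rangle+|1\rangle)/\sqrt2$, $H|1\rangle=(|0\rangle-|1\rangle)/\sqrt2$, and $I$ the identity. A three-letter word such as $IHH$ denotes the tensor product of the listed one-qubit operations applied to the first, second and third qubit respectively. In the communication model, parties may perform arbitrary local operations on their own qubits and classical data, but communicate only by sending classical bits to Alice; no quantum communication is allowed. *)

theory Defs
  imports Complex_Main
begin

text \<open>Bits are modelled as bool (False = 0, True = 1); xor is (\<noteq>).
  A three-bit word x y z lies in E^3 iff x xor y xor z = 0.\<close>

definition inE3 :: "bool \<Rightarrow> bool \<Rightarrow> bool \<Rightarrow> bool" where
  "inE3 a b c \<longleftrightarrow> ((a \<noteq> b) \<noteq> c) = False"

definition f_u :: "bool \<times> bool \<times> bool \<Rightarrow> nat \<Rightarrow> (nat \<Rightarrow> bool) \<Rightarrow> (nat \<Rightarrow> bool) \<Rightarrow> (nat \<Rightarrow> bool) \<Rightarrow> bool" where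
  "f_u u n X Y Z = odd (card {i. i < n \<and> (X i, Y i, Z i) = u})"

definition psi3 :: "bool \<Rightarrow> bool \<Rightarrow> bool \<Rightarrow> real" where
  "psi3 a b c = (if (a, b, c) = (False, False, False) then 1/2
                 else if inE3 a b c then - 1/2 else 0)"

text \<open>Matrix entries <out| G |in> of the one-qubit gates H and I.\<close>
definition hadamard :: "bool \<Rightarrow> bool \<Rightarrow> real" where
  "hadamard out inp = (if out \<and> inp then - 1 / sqrt 2 else 1 / sqrt 2)"

definition ident :: "bool \<Rightarrow> bool \<Rightarrow> real" where
  "ident out inp = (if out = inp then 1 else 0)"

definition gate :: "bool \<Rightarrow> bool \<Rightarrow> bool \<Rightarrow> real" where
  "gate h = (if h then hadamard else ident)"

definition amp3 :: "bool \<Rightarrow> bool \<Rightarrow> bool \<Rightarrow> bool \<Rightarrow> bool \<Rightarrow> bool \<Rightarrow> real" where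
  "amp3 h1 h2 h3 o1 o2 o3 =
     (\<Sum>w1\<in>UNIV. \<Sum>w2\<in>UNIV. \<Sum>w3\<in>UNIV.
        gate h1 o1 w1 * gate h2 o2 w2 * gate h3 o3 w3 * psi3 w1 w2 w3)"

text \<open>The n copies form a product state,
  so the joint amplitude is the product of the per-copy amplitudes.\<close>
definition outcome_prob ::
  "bool \<times> bool \<times> bool \<Rightarrow> nat \<Rightarrow> (nat \<Rightarrow> bool) \<Rightarrow> (nat \<Rightarrow> bool) \<Rightarrow> (nat \<Rightarrow> bool)
   \<Rightarrow> (nat \<Rightarrow> bool) \<Rightarrow> (nat \<Rightarrow> bool) \<Rightarrow> (nat \<Rightarrow> bool) \<Rightarrow> real" where
  "outcome_prob u n X Y Z A B C =
     (\<Prod>i<n. (amp3 (X i \<noteq> fst u) (Y i \<noteq> fst (snd u)) (Z i \<noteq> snd (snd u))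
                   (A i) (B i) (C i))\<^sup>2)"

end

theory Submission
  imports Defs
begin

text \<open>On the i-th copy the parties apply H exactly on the positions where x_i y_i z_i differs
  from u, and this difference word again lies in E^3. A direct computation shows that III
  leaves psi_3 supported on the even-parity words, while each of IHH, HIH, HHI moves it onto the
  odd-parity words. Hence the parity of the three measurement outcomes of copy i reveals whether
  x_i y_i z_i = u, and f_u is the XOR of all 3n outcomes (corrected by the parity of n): Bob
  and Carol each send the XOR of their own outcomes.\<close>

fun xor_upto :: "nat \<Rightarrow> (nat \<Rightarrow> bool) \<Rightarrow> bool" where
  "xor_upto 0 P = False"
| "xor_upto (Suc n) P = (xor_upto n P \<noteq> P n)"

lemma xor_upto_eq_odd_card: "xor_upto n P = odd (card {i. i < n \<and> P i})"
proof (induction n)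
  case 0
  then show ?case by simp
next
  case (Suc n)
  have "{i. i < Suc n \<and> P i} =
        (if P n then insert n {i. i < n \<and> P i} else {i. i < n \<and> P i})"
    by (auto simp: less_Suc_eq)
  with Suc show ?case by simp
qed

lemma xor_upto_xor: "xor_upto n (\<lambda>i. P i \<noteq> Q i) = (xor_upto n P \<noteq> xor_upto n Q)"
  by (induction n) auto

lemma xor_upto_not: "xor_upto n (\<lambda>i. \<not> P i) = (odd n \<noteq> xor_upto n P)"
  by (induction n) auto

lemma xor_upto_cong: "(\<And>i. i < n \<Longrightarrow> P i = Q i) \<Longrightarrow> xor_upto n P = xor_upto n Q"
  by (induction n) auto

lemma f_u_eq_xor_upto: "f_u u n X Y Z = xor_upto n (\<lambda>i. (X i, Y i, Z i) = u)"
  by (simp add: f_u_def xor_upto_eq_odd_card)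

lemma inE3_xor:
  "inE3 x y z \<Longrightarrow> inE3 u1 u2 u3 \<Longrightarrow> inE3 (x \<noteq> u1) (y \<noteq> u2) (z \<noteq> u3)"
  by (auto simp: inE3_def)

lemma amp3_nonzero_parity:
  assumes "inE3 h1 h2 h3" and "amp3 h1 h2 h3 a b c \<noteq> 0"
  shows "((a \<noteq> b) \<noteq> c) \<longleftrightarrow> h1 \<or> h2 \<or> h3"
  using assms
  by (cases h1; cases h2; cases h3; cases a; cases b; cases c)
     (simp_all add: inE3_def amp3_def UNIV_bool gate_def hadamard_def ident_def psi3_def
        field_simps)

lemma outcome_parity_detects_u:
  assumes "inE3 x y z" and "inE3 u1 u2 u3"
    and "amp3 (x \<noteq> u1) (y \<noteq> u2) (z \<noteq> u3) a b c \<noteq> 0"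
  shows "(x, y, z) = (u1, u2, u3) \<longleftrightarrow> \<not> ((a \<noteq> b) \<noteq> c)"
  using amp3_nonzero_parity[OF inE3_xor[OF assms(1,2)] assms(3)] by auto

lemma outcome_prob_pos_imp_amp3_nonzero:
  assumes "outcome_prob u n X Y Z A B C > 0" and "i < n"
  shows "amp3 (X i \<noteq> fst u) (Y i \<noteq> fst (snd u)) (Z i \<noteq> snd (snd u)) (A i) (B i) (C i) \<noteq> 0"
proof
  assume "amp3 (X i \<noteq> fst u) (Y i \<noteq> fst (snd u)) (Z i \<noteq> snd (snd u)) (A i) (B i) (C i) = 0"
  then have "outcome_prob u n X Y Z A B C = 0"
    unfolding outcome_prob_def using \<open>i < n\<close> by (auto intro!: prod_zero)
  with assms(1) show False by simp
qed

theorem theorem1: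
  fixes u :: "bool \<times> bool \<times> bool" and n :: nat
  assumes "inE3 (fst u) (fst (snd u)) (snd (snd u))"
    and "n \<ge> 1"
  shows "\<exists>(gB :: (nat \<Rightarrow> bool) \<Rightarrow> (nat \<Rightarrow> bool) \<Rightarrow> bool)
           (gC :: (nat \<Rightarrow> bool) \<Rightarrow> (nat \<Rightarrow> bool) \<Rightarrow> bool)
           (gA :: (nat \<Rightarrow> bool) \<Rightarrow> (nat \<Rightarrow> bool) \<Rightarrow> bool \<Rightarrow> bool \<Rightarrow> bool).
           \<forall>X Y Z A B C.
             (\<forall>i<n. inE3 (X i) (Y i) (Z i)) \<longrightarrow>
             outcome_prob u n X Y Z A B C > 0 \<longrightarrow>
             gA X A (gB Y B) (gC Z C) = f_u u n X Y Z"
proof (intro exI allI impI)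
  fix X Y Z A B C :: "nat \<Rightarrow> bool"
  assume promise: "\<forall>i<n. inE3 (X i) (Y i) (Z i)"
    and possible: "outcome_prob u n X Y Z A B C > 0"
  have "f_u u n X Y Z = xor_upto n (\<lambda>i. \<not> ((A i \<noteq> B i) \<noteq> C i))"
    unfolding f_u_eq_xor_upto
  proof (rule xor_upto_cong)
    fix i assume "i < n"
    with promise assms(1) outcome_prob_pos_imp_amp3_nonzero[OF possible]
    show "((X i, Y i, Z i) = u) = (\<not> ((A i \<noteq> B i) \<noteq> C i))"
      using outcome_parity_detects_u by (cases u) auto
  qed
  also have "\<dots> = (odd n \<noteq> ((xor_upto n A \<noteq> xor_upto n B) \<noteq> xor_upto n C))"
    using xor_upto_not[of n "\<lambda>i. (A i \<noteq> B i) \<noteq> C i"]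
      xor_upto_xor[of n "\<lambda>i. A i \<noteq> B i" C] xor_upto_xor[of n A B]
    by auto
  finally show "(\<lambda>X A b c. odd n \<noteq> ((xor_upto n A \<noteq> b) \<noteq> c)) X A
      ((\<lambda>Y B. xor_upto n B) Y B) ((\<lambda>Z C. xor_upto n C) Z C) = f_u u n X Y Z"
    by simp
qed

end
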